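(* Let $A$ be a finite set with $|A|=n$. Consider the set of all bijections $f:A\to A$ for which there exists a binary operation $*$ on $A$ such that $(A,* )$ is a cyclic group and $f$ is an automorphism of $(A,* )$. Then these bijections realise at most $\phi(n)$ distinct cycle structures.
   Context: $\phi$ is Euler's totient function. The cycle structure of a bijection $f$ of a finite set is the description of how many cycles of each length $f$ has (a cycle being a sequence $a_1,\dots,a_m$ of distinct elements with $f(a_j)=a_{j+1}$ for $j<m$ and $f(a_m)=a_1$, of length $m$; fixed points are cycles of length $1$). *)

theory Defs
  imports "HOL-Algebra.Elementary_Groups" "HOL-Combinatorics.Orbits" "HOL-Combinatorics.Permutations"
    "HOL-Number_Theory.Totient"
begin

definition cycle_structure :: "'a set \<Rightarrow> ('a \<Rightarrow> 'a) \<Rightarrow> nat \<Rightarrow> nat" where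
  "cycle_structure A f = (\<lambda>m. card {C. \<exists>x\<in>A. C = orbit f x \<and> card C = m})"

end

theory Submission
  imports Defs "HOL-Algebra.Multiplicative_Group"
begin

text \<open>If g generates the cyclic group G of order n, an automorphism f is determined by
  f g = g [^] k, and then f (g [^] i) = g [^] (k * i mod n). Transported along the bijection
  i \<mapsto> g [^] i from {..<n}, f becomes multiplication by k modulo n, so its cycle structure
  depends only on k. As f g again has order n, k is coprime to n, which leaves at most
  \<phi>(n) possibilities.\<close>

lemma funpow_conjugate:
  assumes "m ` S \<subseteq> S" and "\<forall>y\<in>S. f (h y) = h (m y)" and "x \<in> S"
  shows "(m ^^ j) x \<in> S \<and> (f ^^ j) (h x) = h ((m ^^ j) x)"
  using assms by (induction j) auto

lemma orbit_conjugate: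
  assumes "m ` S \<subseteq> S" and "\<forall>y\<in>S. f (h y) = h (m y)" and "x \<in> S"
  shows "orbit f (h x) = h ` orbit m x" and "orbit m x \<subseteq> S"
  using funpow_conjugate[OF assms] by (auto simp: orbit_altdef)

lemma cycle_structure_conjugate:
  assumes h: "bij_betw h S A" and "m ` S \<subseteq> S" and "\<forall>y\<in>S. f (h y) = h (m y)"
  shows "cycle_structure A f = cycle_structure S m"
proof
  fix j
  note orbit = orbit_conjugate[OF assms(2,3)]
  have card_eq: "card (h ` D) = card D" if "D \<subseteq> S" for D
    using h that by (metis bij_betw_def card_image inj_on_subset)
  have "{C. \<exists>x\<in>A. C = orbit f x \<and> card C = j}
      = image h ` {D. \<exists>y\<in>S. D = orbit m y \<and> card D = j}"
    using bij_betw_imp_surj_on[OF h] orbit card_eq by fastforce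
  moreover have "inj_on (image h) {D. \<exists>y\<in>S. D = orbit m y \<and> card D = j}"
    by (rule inj_on_subset[OF inj_on_image_Pow[OF bij_betw_imp_inj_on[OF h]]])
      (use orbit(2) in auto)
  ultimately show "cycle_structure A f j = cycle_structure S m j"
    unfolding cycle_structure_def by (simp add: card_image)
qed

lemma (in group) ord_inj_hom:
  assumes h: "h \<in> hom G H" "inj_on h (carrier G)" and "group H" and x: "x \<in> carrier G"
  shows "group.ord H (h x) = ord x"
proof -
  interpret H: group H by fact
  have "h x [^]\<^bsub>H\<^esub> i = \<one>\<^bsub>H\<^esub> \<longleftrightarrow> ord x dvd i" for i :: nat
  proof -
    have "h x [^]\<^bsub>H\<^esub> i = h (x [^] i)"
      using hom_nat_pow[OF h(1) x is_group H.is_group] by simp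
    also have "\<dots> = \<one>\<^bsub>H\<^esub> \<longleftrightarrow> x [^] i = \<one>"
      using h hom_one[OF h(1) is_group H.is_group] x by (metis inj_onD nat_pow_closed one_closed)
    finally show ?thesis
      using pow_eq_id[OF x] by simp
  qed
  then show ?thesis
    using H.ord_unique hom_in_carrier[OF h(1) x] by blast
qed

lemma (in group) pow_mod_ord:
  assumes x: "x \<in> carrier G"
  shows "x [^] (i mod ord x) = x [^] (i :: nat)"
proof -
  have "x [^] i = x [^] (ord x * (i div ord x) + i mod ord x)"
    by simp
  also have "\<dots> = x [^] (i mod ord x)"
    using x by (simp only: nat_pow_mult[symmetric] nat_pow_pow[symmetric] pow_ord_eq_1) simp
  finally show ?thesis by simp
qed

lemma (in group) bij_betw_pow_generate:
  assumes "x \<in> carrier G" and "ord x \<noteq> 0"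
  shows "bij_betw (\<lambda>i. x [^] i) {..<ord x} (generate G {x})"
proof -
  have "{..<ord x} = {0..ord x - 1}"
    using assms(2) by auto
  moreover have "generate G {x} = (\<lambda>i. x [^] i) ` {0..ord x - 1}"
    using generate_pow_nat ord_elems_inf_carrier assms by auto
  ultimately show ?thesis
    using assms ord_inj by (simp add: bij_betw_def)
qed

lemma (in group) cycle_structure_cyclic_automorphism:
  assumes "finite (carrier G)" and "cyclic_group G" and "f \<in> iso G G"
  shows "\<exists>k \<in> totatives (order G).
           cycle_structure (carrier G) f = cycle_structure {..<order G} (\<lambda>i. k * i mod order G)"
proof -
  define n where "n = order G"
  obtain g where g: "g \<in> carrier G" and "subgroup_generated G {g} = G"
    using assms(2) unfolding cyclic_group_def by blast
  then have gen: "generate G {g} = carrier G"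
    using carrier_subgroup_generated[of G "{g}"] by (metis Int_absorb1 empty_subsetI insert_subset)
  have ord: "ord g = n"
    using generate_pow_card[OF g] gen unfolding n_def order_def by simp
  have "n > 0"
    using ord ord_ge_1[OF assms(1) g] by simp
  have bij: "bij_betw (\<lambda>i. g [^] i) {..<n} (carrier G)"
    using bij_betw_pow_generate[OF g] ord gen \<open>n > 0\<close> by simp
  have hom: "f \<in> hom G G" and inj: "inj_on f (carrier G)"
    using assms(3) by (auto simp: iso_def bij_betw_def)
  obtain k0 where "k0 < n" and "f g = g [^] k0"
    using bij hom_in_carrier[OF hom g] by (auto simp: bij_betw_def)
  \<comment> \<open>if k0 = 0 take k = n instead, as totatives n excludes 0\<close>
  then obtain k where k: "0 < k" "k \<le> n" and fg: "f g = g [^] k"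
    using ord pow_ord_eq_1[OF g] by (metis le_less nat_pow_0 neq0_conv)
  have "coprime k n"
    using ord_inj_hom[OF hom inj is_group g] fg pow_ord_eq_ord_iff[OF assms(1) g] ord by simp
  with k have "k \<in> totatives n"
    by (simp add: in_totatives_iff)
  moreover have "f (g [^] i) = g [^] (k * i mod n)" for i :: nat
    using hom_nat_pow[OF hom g is_group is_group] fg g pow_mod_ord[OF g] ord
    by (simp add: nat_pow_pow)
  then have "cycle_structure (carrier G) f = cycle_structure {..<n} (\<lambda>i. k * i mod n)"
    using \<open>n > 0\<close> by (intro cycle_structure_conjugate[OF bij]) auto
  ultimately show ?thesis
    unfolding n_def by blast
qed

theorem corollary2p2:
  fixes A :: "'a set" and n :: nat
  assumes "finite A" and "card A = n"
  shows "card (cycle_structure A ` {f. f permutes A \<and>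
            (\<exists>G :: 'a monoid. carrier G = A \<and> group G \<and> cyclic_group G \<and> f \<in> iso G G)})
         \<le> totient n"
proof -
  let ?auts = "{f. f permutes A \<and>
            (\<exists>G :: 'a monoid. carrier G = A \<and> group G \<and> cyclic_group G \<and> f \<in> iso G G)}"
  let ?mult = "\<lambda>k. cycle_structure {..<n} (\<lambda>i. k * i mod n)"
  have "cycle_structure A ` ?auts \<subseteq> ?mult ` totatives n"
  proof (rule image_subsetI)
    fix f
    assume "f \<in> ?auts"
    then obtain G :: "'a monoid"
      where "carrier G = A" "group G" "cyclic_group G" "f \<in> iso G G"
      by blast
    then show "cycle_structure A f \<in> ?mult ` totatives n"
      using group.cycle_structure_cyclic_automorphism[of G f] assms
      by (force simp: order_def)
  qed
  then have "card (cycle_structure A ` ?auts) \<le> card (?mult ` totatives n)"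
    by (intro card_mono) auto
  also have "\<dots> \<le> totient n"
    unfolding totient_def by (rule card_image_le) simp
  finally show ?thesis .
qed

end
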